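(* There exist constants $C>0$, $\delta_0\in(0,\tfrac18)$ and $\epsilon_0>0$ such that the following holds for all integers $n\ge2$ and $m\ge1$, every $\epsilon\in(0,\epsilon_0)$, and every forecasting competition mechanism $M$: if for every belief matrix $P\in[0,1]^{n\times m}$ and every ground truth $\vec\theta\in[0,1]^m$, with truthful reports $R=P$, the forecaster $i\sim M(P,\vec y)$ (with $\vec y\sim\vec\theta$) is $\epsilon$-optimal with probability at least $1-\delta_0$, then $m\ge\frac{C\ln n}{\epsilon^2}$. That is, the nonstrategic event complexity of every mechanism is $\Omega(\log(n)/\epsilon^2)$.
   Context: A forecasting competition mechanism is a map $M:[0,1]^{n\times m}\times\{0,1\}^m\to\Delta_n$ (reports and realized outcomes to a distribution over the $n$ forecasters). Events are independent with $\Pr[y_t=1]=\theta_t$. Accuracy of forecaster $i$ with beliefs $p_i$: $a_i=1-\frac1m\sum_t(p_{it}-\theta_t)^2$; $i$ is $\epsilon$-optimal if $a_i\ge\max_ja_j-\epsilon$. *)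

theory Defs
  imports "HOL-Probability.Probability"
begin

text \<open>A report / belief matrix is a function nat => nat => real (row i = forecaster, column t = event);
  outcomes are functions nat => bool; ground truths are functions nat => real.\<close>

definition belief_matrices :: "nat \<Rightarrow> nat \<Rightarrow> (nat \<Rightarrow> nat \<Rightarrow> real) set" where
  "belief_matrices n m = {P. (\<forall>i<n. \<forall>t<m. 0 \<le> P i t \<and> P i t \<le> 1) \<and>
                             (\<forall>i t. (n \<le> i \<or> m \<le> t) \<longrightarrow> P i t = 0)}"

definition ground_truths :: "nat \<Rightarrow> (nat \<Rightarrow> real) set" where
  "ground_truths m = {\<theta>. (\<forall>t<m. 0 \<le> \<theta> t \<and> \<theta> t \<le> 1) \<and> (\<forall>t. m \<le> t \<longrightarrow> \<theta> t = 0)}"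

definition is_mechanism ::
  "nat \<Rightarrow> ((nat \<Rightarrow> nat \<Rightarrow> real) \<Rightarrow> (nat \<Rightarrow> bool) \<Rightarrow> nat pmf) \<Rightarrow> bool" where
  "is_mechanism n M \<longleftrightarrow> (\<forall>R y. set_pmf (M R y) \<subseteq> {..<n})"

definition outcome_dist :: "nat \<Rightarrow> (nat \<Rightarrow> real) \<Rightarrow> (nat \<Rightarrow> bool) pmf" where
  "outcome_dist m \<theta> = Pi_pmf {..<m} False (\<lambda>t. bernoulli_pmf (\<theta> t))"

definition accuracy :: "nat \<Rightarrow> (nat \<Rightarrow> nat \<Rightarrow> real) \<Rightarrow> (nat \<Rightarrow> real) \<Rightarrow> nat \<Rightarrow> real" where
  "accuracy m P \<theta> i = 1 - (1 / real m) * (\<Sum>t<m. (P i t - \<theta> t)^2)"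

definition eps_optimal ::
  "nat \<Rightarrow> nat \<Rightarrow> (nat \<Rightarrow> nat \<Rightarrow> real) \<Rightarrow> (nat \<Rightarrow> real) \<Rightarrow> real \<Rightarrow> nat \<Rightarrow> bool" where
  "eps_optimal n m P \<theta> \<epsilon> i \<longleftrightarrow> i < n \<and>
     accuracy m P \<theta> i \<ge> (MAX j\<in>{..<n}. accuracy m P \<theta> j) - \<epsilon>"

definition success_prob ::
  "nat \<Rightarrow> nat \<Rightarrow> ((nat \<Rightarrow> nat \<Rightarrow> real) \<Rightarrow> (nat \<Rightarrow> bool) \<Rightarrow> nat pmf) \<Rightarrow>
   (nat \<Rightarrow> nat \<Rightarrow> real) \<Rightarrow> (nat \<Rightarrow> real) \<Rightarrow> real \<Rightarrow> real" where
  "success_prob n m M P \<theta> \<epsilon> =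
     measure_pmf.prob (bind_pmf (outcome_dist m \<theta>) (\<lambda>y. M P y)) {i. eps_optimal n m P \<theta> \<epsilon> i}"

end

theory Submission
  imports Defs
begin

text \<open>
  Take a family of subsets of the \<open>m\<close> events whose pairwise symmetric differences exceed
  \<open>m/4\<close>; by a Gilbert--Varshamov volume argument a maximal one has \<open>\<ge> e^(m/20)\<close> members.
  Let forecaster \<open>k\<close> report the indicator of the \<open>k\<close>-th set \<open>S\<^sub>k\<close> and let the truth be
  \<open>1/2 + 2\<epsilon>\<close> on \<open>S\<^sub>k\<close> and \<open>1/2 - 2\<epsilon>\<close> off it: then only reports of \<open>S\<^sub>k\<close> are \<open>\<epsilon>\<close>-optimal, so a
  mechanism succeeding with probability \<open>1 - \<delta>\<close> on all \<open>N\<close> such instances decodes \<open>k\<close> from the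
  outcomes. Comparing every outcome distribution with the uniform one by Cauchy--Schwarz gives
  \<open>N (1 - \<delta>)\<^sup>2 \<le> (1 + 16\<epsilon>\<^sup>2)\<^sup>m \<le> exp (16\<epsilon>\<^sup>2m)\<close>. With \<open>N = min n |F|\<close> this yields
  \<open>ln n \<le> 20\<epsilon>\<^sup>2m\<close>, the alternative \<open>N = |F| < n\<close> being excluded by \<open>ln |F| \<ge> m/20\<close>.
\<close>

text \<open>Fano's inequality in \<open>\<chi>\<^sup>2\<close> form: \<open>R\<close> bounds \<open>1 + \<chi>\<^sup>2(p\<^sub>k \<parallel> u)\<close> and \<open>Q y\<close> is a randomized decoder.\<close>

lemma decoding_success_bound:
  fixes u :: "'a \<Rightarrow> real" and p :: "nat \<Rightarrow> 'a \<Rightarrow> real" and Q :: "'a \<Rightarrow> nat \<Rightarrow> real"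
  assumes "finite Y"
    and u_pos: "\<And>y. y \<in> Y \<Longrightarrow> 0 < u y" and u_sum: "(\<Sum>y\<in>Y. u y) = 1"
    and Q_nonneg: "\<And>y k. y \<in> Y \<Longrightarrow> k < N \<Longrightarrow> 0 \<le> Q y k"
    and Q_sum: "\<And>y. y \<in> Y \<Longrightarrow> (\<Sum>k<N. Q y k) \<le> 1"
    and chi: "\<And>k. k < N \<Longrightarrow> (\<Sum>y\<in>Y. (p k y)\<^sup>2 / u y) \<le> R"
    and success: "\<And>k. k < N \<Longrightarrow> c \<le> (\<Sum>y\<in>Y. p k y * Q y k)"
    and "0 \<le> c" "0 \<le> R"
  shows "real N * c\<^sup>2 \<le> R"
proof -
  have u_nonneg: "0 \<le> u y" if "y \<in> Y" for y
    using u_pos[OF that] by simp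
  have Q_le_1: "Q y k \<le> 1" if "y \<in> Y" "k < N" for y k
    using member_le_sum[of k "{..<N}" "Q y"] Q_nonneg Q_sum that by fastforce
  have per_k: "c\<^sup>2 \<le> R * (\<Sum>y\<in>Y. u y * Q y k)" if k: "k < N" for k
  proof -
    have "c\<^sup>2 \<le> (\<Sum>y\<in>Y. p k y * Q y k)\<^sup>2"
      using success[OF k] \<open>0 \<le> c\<close> by (simp add: power_mono)
    also have "\<dots> = (\<Sum>y\<in>Y. (p k y / sqrt (u y)) * (sqrt (u y) * Q y k))\<^sup>2"
      using u_pos by (intro arg_cong[where f = "\<lambda>x. x\<^sup>2"] sum.cong) (auto simp: less_imp_neq[symmetric])
    also have "\<dots> \<le> (\<Sum>y\<in>Y. (p k y / sqrt (u y))\<^sup>2) * (\<Sum>y\<in>Y. (sqrt (u y) * Q y k)\<^sup>2)"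
      by (rule Cauchy_Schwarz_ineq_sum)
    also have "\<dots> = (\<Sum>y\<in>Y. (p k y)\<^sup>2 / u y) * (\<Sum>y\<in>Y. u y * (Q y k)\<^sup>2)"
      using u_nonneg by (simp add: power_divide power_mult_distrib)
    also have "\<dots> \<le> R * (\<Sum>y\<in>Y. u y * Q y k)"
    proof (rule mult_mono)
      show "(\<Sum>y\<in>Y. u y * (Q y k)\<^sup>2) \<le> (\<Sum>y\<in>Y. u y * Q y k)"
        using u_nonneg Q_nonneg Q_le_1 k
        by (intro sum_mono mult_left_mono) (auto simp: power2_eq_square intro: mult_left_le)
    qed (use chi k \<open>0 \<le> R\<close> u_nonneg Q_nonneg in \<open>auto intro!: sum_nonneg\<close>)
    finally show ?thesis .
  qed
  have "real N * c\<^sup>2 = (\<Sum>k<N. c\<^sup>2)" by simp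
  also have "\<dots> \<le> (\<Sum>k<N. R * (\<Sum>y\<in>Y. u y * Q y k))"
    by (intro sum_mono per_k) simp
  also have "\<dots> = R * (\<Sum>y\<in>Y. u y * (\<Sum>k<N. Q y k))"
    by (simp add: sum_distrib_left sum.swap[of _ "{..<N}"])
  also have "\<dots> \<le> R * (\<Sum>y\<in>Y. u y)"
    using Q_sum u_nonneg \<open>0 \<le> R\<close>
    by (intro mult_left_mono sum_mono) (auto intro: mult_left_le)
  finally show ?thesis by (simp add: u_sum)
qed

definition outcome_space :: "nat \<Rightarrow> (nat \<Rightarrow> bool) set" where
  "outcome_space m = PiE_dflt {..<m} False (\<lambda>_. UNIV)"

lemma finite_outcome_space: "finite (outcome_space m)"
  by (auto simp: outcome_space_def)

lemma set_pmf_outcome_dist: "set_pmf (outcome_dist m \<theta>) \<subseteq> outcome_space m"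
  unfolding outcome_dist_def outcome_space_def
  by (rule order_trans[OF set_Pi_pmf_subset]) (auto simp: PiE_dflt_def)

lemma pmf_outcome_dist:
  "y \<in> outcome_space m \<Longrightarrow> pmf (outcome_dist m \<theta>) y = (\<Prod>t<m. pmf (bernoulli_pmf (\<theta> t)) (y t))"
  unfolding outcome_dist_def outcome_space_def by (subst pmf_Pi') (auto simp: PiE_dflt_def)

lemma pmf_outcome_dist_uniform:
  "y \<in> outcome_space m \<Longrightarrow> pmf (outcome_dist m (\<lambda>_. 1/2)) y = (1/2) ^ m"
  by (simp add: pmf_outcome_dist)

lemma sum_pmf_outcome_dist_sq_div_uniform:
  assumes "\<And>t. t < m \<Longrightarrow> 0 \<le> \<theta> t \<and> \<theta> t \<le> 1"
  shows "(\<Sum>y\<in>outcome_space m. (pmf (outcome_dist m \<theta>) y)\<^sup>2 / pmf (outcome_dist m (\<lambda>_. 1/2)) y)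
           = (\<Prod>t<m. 2 * ((\<theta> t)\<^sup>2 + (1 - \<theta> t)\<^sup>2))"
proof -
  define f where "f y = (\<Prod>t<m. 2 * pmf (bernoulli_pmf (\<theta> t)) (y t))" for y
  have "(pmf (outcome_dist m \<theta>) y)\<^sup>2 / pmf (outcome_dist m (\<lambda>_. 1/2)) y = f y * pmf (outcome_dist m \<theta>) y"
    if "y \<in> outcome_space m" for y
    using that by (simp add: pmf_outcome_dist f_def prod.distrib power2_eq_square power_one_over)
  hence "(\<Sum>y\<in>outcome_space m. (pmf (outcome_dist m \<theta>) y)\<^sup>2 / pmf (outcome_dist m (\<lambda>_. 1/2)) y)
           = (\<Sum>y\<in>outcome_space m. f y * pmf (outcome_dist m \<theta>) y)"
    by (rule sum.cong[OF refl])
  also have "\<dots> = measure_pmf.expectation (outcome_dist m \<theta>) f"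
    by (rule integral_measure_pmf_real[symmetric])
      (use finite_outcome_space set_pmf_outcome_dist in auto)
  also have "\<dots> = (\<Prod>t<m. measure_pmf.expectation (bernoulli_pmf (\<theta> t))
                       (\<lambda>b. 2 * pmf (bernoulli_pmf (\<theta> t)) b))"
    unfolding outcome_dist_def f_def
    by (rule expectation_prod_Pi_pmf) (auto intro: integrable_measure_pmf_finite)
  also have "\<dots> = (\<Prod>t<m. 2 * ((\<theta> t)\<^sup>2 + (1 - \<theta> t)\<^sup>2))"
    using assms by (intro prod.cong refl) (simp add: integral_bernoulli_pmf power2_eq_square algebra_simps)
  finally show ?thesis .
qed

lemma success_prob_le_sum_outcome_space:
  assumes "{i. eps_optimal n m P \<theta> \<epsilon> i} \<subseteq> G" "finite G"
  shows "success_prob n m M P \<theta> \<epsilon>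
           \<le> (\<Sum>y\<in>outcome_space m. pmf (outcome_dist m \<theta>) y * (\<Sum>i\<in>G. pmf (M P y) i))"
proof -
  let ?W = "bind_pmf (outcome_dist m \<theta>) (\<lambda>y. M P y)"
  have "success_prob n m M P \<theta> \<epsilon> \<le> measure_pmf.prob ?W G"
    unfolding success_prob_def by (rule measure_pmf.finite_measure_mono) (use assms in auto)
  also have "\<dots> = (\<Sum>i\<in>G. \<Sum>y\<in>outcome_space m. pmf (M P y) i * pmf (outcome_dist m \<theta>) y)"
    unfolding measure_measure_pmf_finite[OF \<open>finite G\<close>] pmf_bind
    by (intro sum.cong refl integral_measure_pmf_real finite_outcome_space)
      (use set_pmf_outcome_dist in auto)
  also have "\<dots> = (\<Sum>y\<in>outcome_space m. pmf (outcome_dist m \<theta>) y * (\<Sum>i\<in>G. pmf (M P y) i))"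
    by (subst sum.swap) (simp add: sum_distrib_left mult.commute)
  finally show ?thesis .
qed

definition far_family :: "nat \<Rightarrow> nat set set \<Rightarrow> bool" where
  "far_family m F \<longleftrightarrow> F \<subseteq> Pow {..<m} \<and> (\<forall>S\<in>F. \<forall>T\<in>F. S \<noteq> T \<longrightarrow> m < 4 * card (sym_diff S T))"

lemma far_family_subset: "far_family m F \<Longrightarrow> G \<subseteq> F \<Longrightarrow> far_family m G"
  unfolding far_family_def by (meson subset_iff order_trans)

lemma far_family_finite: "far_family m F \<Longrightarrow> finite F"
  unfolding far_family_def using finite_subset[of F "Pow {..<m}"] by auto

lemma exists_maximal_far_family:
  obtains F where "far_family m F" "\<And>G. far_family m G \<Longrightarrow> card G \<le> card F"
proof -
  have "card F < Suc (2 ^ m)" if "far_family m F" for F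
    using card_mono[of "Pow {..<m}" F] that by (auto simp: far_family_def card_Pow)
  moreover have "far_family m {}" by (simp add: far_family_def)
  ultimately show ?thesis
    using that ex_has_greatest_nat[of "far_family m" "{}" card "Suc (2 ^ m)"] by blast
qed

lemma maximal_far_family_covers:
  assumes "far_family m F" and maximal: "\<And>G. far_family m G \<Longrightarrow> card G \<le> card F"
    and "T \<subseteq> {..<m}"
  shows "\<exists>S\<in>F. 4 * card (sym_diff S T) \<le> m"
proof (rule ccontr)
  assume "\<not> ?thesis"
  hence "far_family m (insert T F)" and "T \<notin> F"
    using assms(1,3) unfolding far_family_def by (auto simp: Un_commute)
  thus False
    using maximal[of "insert T F"] far_family_finite[OF assms(1)] by simp
qed

lemma card_Pow_le_covering:
  assumes "finite F" "F \<subseteq> Pow {..<m}"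
    and cover: "\<And>T. T \<subseteq> {..<m} \<Longrightarrow> \<exists>S\<in>F. card (sym_diff S T) \<le> d"
  shows "2 ^ m \<le> card F * card {D. D \<subseteq> {..<m} \<and> card D \<le> d}"
proof -
  define B where "B = {D. D \<subseteq> {..<m} \<and> card D \<le> d}"
  have "finite B"
    by (rule finite_subset[of _ "Pow {..<m}"]) (auto simp: B_def)
  have "Pow {..<m} \<subseteq> (\<Union>S\<in>F. (\<lambda>D. sym_diff D S) ` B)"
  proof
    fix T assume "T \<in> Pow {..<m}"
    then obtain S where "S \<in> F" and close: "card (sym_diff S T) \<le> d"
      using cover by auto
    have "sym_diff S T \<in> B"
      using close \<open>S \<in> F\<close> \<open>T \<in> Pow {..<m}\<close> assms(2) by (auto simp: B_def)
    moreover have "T = sym_diff (sym_diff S T) S" by auto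
    ultimately show "T \<in> (\<Union>S\<in>F. (\<lambda>D. sym_diff D S) ` B)"
      using \<open>S \<in> F\<close> by blast
  qed
  hence "card (Pow {..<m::nat}) \<le> card (\<Union>S\<in>F. (\<lambda>D. sym_diff D S) ` B)"
    using \<open>finite F\<close> \<open>finite B\<close> by (intro card_mono) auto
  also have "\<dots> \<le> (\<Sum>S\<in>F. card ((\<lambda>D. sym_diff D S) ` B))"
    by (rule card_UN_le[OF \<open>finite F\<close>])
  also have "\<dots> \<le> (\<Sum>S\<in>F. card B)"
    using \<open>finite B\<close> by (intro sum_mono card_image_le)
  finally show ?thesis by (simp add: card_Pow B_def)
qed

lemma card_subsets_card_le:
  "card {D. D \<subseteq> {..<m} \<and> card D \<le> d} \<le> (\<Sum>i\<le>d. m choose i)"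
proof -
  have "{D. D \<subseteq> {..<m} \<and> card D \<le> d} = (\<Union>i\<le>d. {D. D \<subseteq> {..<m} \<and> card D = i})"
    by auto
  hence "card {D. D \<subseteq> {..<m} \<and> card D \<le> d} \<le> (\<Sum>i\<le>d. card {D. D \<subseteq> {..<m} \<and> card D = i})"
    by (simp add: card_UN_le)
  also have "\<dots> = (\<Sum>i\<le>d. m choose i)"
    by (simp add: n_subsets)
  finally show ?thesis .
qed

lemma sum_binomial_atMost_mult_power_le:
  assumes "d \<le> m"
  shows "(\<Sum>i\<le>d. m choose i) * 3 ^ (m - d) \<le> (4::nat) ^ m"
proof -
  have "(\<Sum>i\<le>d. m choose i) * 3 ^ (m - d) \<le> (\<Sum>i\<le>d. (m choose i) * 3 ^ (m - i))"
    unfolding sum_distrib_right by (intro sum_mono mult_left_mono power_increasing) auto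
  also have "\<dots> \<le> (\<Sum>i\<le>m. (m choose i) * 3 ^ (m - i))"
    by (rule sum_mono2) (use assms in auto)
  also have "\<dots> = (1 + 3) ^ m"
    by (subst binomial_ring) simp
  finally show ?thesis by simp
qed

lemma card_maximal_far_family_ge:
  assumes F: "far_family m F" and maximal: "\<And>G. far_family m G \<Longrightarrow> card G \<le> card F"
  shows "2 ^ m * 3 ^ (m - m div 4) \<le> card F * 4 ^ m"
proof -
  define B where "B = {D. D \<subseteq> {..<m} \<and> card D \<le> m div 4}"
  have covering: "2 ^ m \<le> card F * card B"
    unfolding B_def
  proof (rule card_Pow_le_covering)
    show "finite F" using F by (rule far_family_finite)
    show "F \<subseteq> Pow {..<m}" using F by (simp add: far_family_def)
    fix T assume "T \<subseteq> {..<m}"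
    then obtain S where "S \<in> F" "4 * card (sym_diff S T) \<le> m"
      using maximal_far_family_covers[OF F maximal] by blast
    thus "\<exists>S\<in>F. card (sym_diff S T) \<le> m div 4"
      by (intro bexI[of _ S]) auto
  qed
  have ball: "card B * 3 ^ (m - m div 4) \<le> 4 ^ m"
    unfolding B_def
    by (rule order_trans[OF mult_le_mono1[OF card_subsets_card_le] sum_binomial_atMost_mult_power_le])
      simp
  have "2 ^ m * 3 ^ (m - m div 4) \<le> card F * card B * 3 ^ (m - m div 4)"
    by (rule mult_le_mono1[OF covering])
  also have "\<dots> \<le> card F * 4 ^ m"
    unfolding mult.assoc by (rule mult_le_mono2[OF ball])
  finally show ?thesis .
qed

lemma ln_ge_of_volume_bound:
  assumes bound: "2 ^ m * 3 ^ (m - m div 4) \<le> k * 4 ^ m"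
  shows "real m / 20 \<le> ln (real k)"
proof -
  have "0 < k"
    using bound by (auto intro: ccontr)
  have "real (2 ^ m * 3 ^ (m - m div 4)) \<le> real (k * 4 ^ m)"
    using bound by (simp only: of_nat_le_iff)
  hence "2 ^ m * 3 ^ (m - m div 4) \<le> 2 ^ m * (real k * 2 ^ m)"
    by (simp add: power_mult_distrib[symmetric] mult_ac)
  hence "ln (3 ^ (m - m div 4)) \<le> ln (real k * 2 ^ m)"
    by (intro ln_mono) simp_all
  hence "real (m - m div 4) * ln 3 \<le> ln (real k) + m * ln 2"
    using \<open>0 < k\<close> by (simp add: ln_mult ln_realpow)
  moreover have "3 * (real m * ln 3) \<le> 4 * (real (m - m div 4) * ln 3)"
  proof -
    have "real (3 * m) \<le> real (4 * (m - m div 4))"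
      unfolding of_nat_le_iff by presburger
    hence "3 * real m * ln 3 \<le> 4 * real (m - m div 4) * ln 3"
      by (intro mult_right_mono) simp_all
    thus ?thesis by (simp only: mult.assoc)
  qed
  moreover have "real m / 5 \<le> 3 * (real m * ln 3) - 4 * (real m * ln 2)"
  proof -
    have "ln (16/27 :: real) \<le> 16/27 - 1"
      by (rule ln_le_minus_one) simp
    moreover have "ln (16/27 :: real) = 4 * ln 2 - 3 * ln 3"
      using ln_realpow[of 2 4] ln_realpow[of 3 3] by (simp add: ln_div)
    ultimately have "1/5 \<le> 3 * ln 3 - 4 * ln (2 :: real)" by simp
    hence "real m * (1/5) \<le> real m * (3 * ln 3 - 4 * ln 2)"
      by (rule mult_left_mono) simp
    thus ?thesis by (simp add: algebra_simps)
  qed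
  ultimately show ?thesis by linarith
qed

lemma exists_far_family_ln_card_ge:
  obtains F where "far_family m F" "real m / 20 \<le> ln (real (card F))"
proof -
  obtain F where F: "far_family m F" and maximal: "\<And>G. far_family m G \<Longrightarrow> card G \<le> card F"
    using exists_maximal_far_family[of m] by blast
  show ?thesis
    by (rule that[OF F ln_ge_of_volume_bound[OF card_maximal_far_family_ge[OF F maximal]]])
qed

definition indicator_reports :: "nat \<Rightarrow> nat \<Rightarrow> (nat \<Rightarrow> nat set) \<Rightarrow> nat \<Rightarrow> nat \<Rightarrow> real" where
  "indicator_reports n m S i t = (if i < n \<and> t < m \<and> t \<in> S i then 1 else 0)"

definition biased_truth :: "nat \<Rightarrow> real \<Rightarrow> nat set \<Rightarrow> nat \<Rightarrow> real" where
  "biased_truth m a T t = (if t < m then if t \<in> T then 1/2 + a else 1/2 - a else 0)"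

lemma indicator_reports_in_belief_matrices: "indicator_reports n m S \<in> belief_matrices n m"
  by (auto simp: belief_matrices_def indicator_reports_def)

lemma biased_truth_in_ground_truths:
  "0 \<le> a \<Longrightarrow> a \<le> 1/2 \<Longrightarrow> biased_truth m a T \<in> ground_truths m"
  by (auto simp: ground_truths_def biased_truth_def)

lemma accuracy_indicator_reports_biased_truth:
  assumes "i < n" "S i \<subseteq> {..<m}" "T \<subseteq> {..<m}" "0 < m"
  shows "accuracy m (indicator_reports n m S) (biased_truth m a T) i
           = 1 - (1/2 - a)\<^sup>2 - 2 * a * card (sym_diff (S i) T) / m"
proof -
  define D where "D = sym_diff (S i) T"
  have "(\<Sum>t<m. (indicator_reports n m S i t - biased_truth m a T t)\<^sup>2)
          = (\<Sum>t<m. (1/2 - a)\<^sup>2 + 2 * a * of_bool (t \<in> D))"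
    using assms(1) unfolding D_def
    by (intro sum.cong) (auto simp: indicator_reports_def biased_truth_def power2_eq_square algebra_simps)
  also have "\<dots> = m * (1/2 - a)\<^sup>2 + 2 * a * card D"
  proof -
    have "D \<subseteq> {..<m}" using assms(2,3) by (auto simp: D_def)
    thus ?thesis by (simp add: sum.distrib of_bool_def sum.If_cases Int_absorb1 flip: sum_distrib_left)
  qed
  finally show ?thesis
    using assms(4) by (simp add: accuracy_def D_def field_simps)
qed

lemma eps_optimal_indicator_reports_close:
  assumes opt: "eps_optimal n m (indicator_reports n m S) (biased_truth m (2 * \<epsilon>) (S k)) \<epsilon> i"
    and "k < n" and S: "\<And>j. j < n \<Longrightarrow> S j \<subseteq> {..<m}" and "0 < m" "0 < \<epsilon>"
  shows "4 * card (sym_diff (S i) (S k)) \<le> m"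
proof -
  let ?acc = "accuracy m (indicator_reports n m S) (biased_truth m (2 * \<epsilon>) (S k))"
  have "i < n" and "(MAX j\<in>{..<n}. ?acc j) - \<epsilon> \<le> ?acc i"
    using opt by (auto simp: eps_optimal_def)
  moreover have "?acc k \<le> (MAX j\<in>{..<n}. ?acc j)"
    using \<open>k < n\<close> by (intro Max_ge) auto
  ultimately have "?acc k - \<epsilon> \<le> ?acc i" by linarith
  hence "4 * \<epsilon> * card (sym_diff (S i) (S k)) / m \<le> \<epsilon>"
    using accuracy_indicator_reports_biased_truth[OF \<open>i < n\<close> S S] accuracy_indicator_reports_biased_truth[OF \<open>k < n\<close> S S]
      \<open>i < n\<close> \<open>k < n\<close> \<open>0 < m\<close> by simp
  hence "\<epsilon> * (4 * card (sym_diff (S i) (S k))) \<le> \<epsilon> * m"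
    using \<open>0 < m\<close> by (simp add: field_simps)
  thus ?thesis
    using \<open>0 < \<epsilon>\<close> by (simp flip: of_nat_le_iff)
qed

lemma eps_optimal_indicator_reports_far_family:
  assumes F: "far_family m F" and S: "\<And>j. S j \<in> F"
    and opt: "eps_optimal n m (indicator_reports n m S) (biased_truth m (2 * \<epsilon>) (S k)) \<epsilon> i"
    and "k < n" "0 < m" "0 < \<epsilon>"
  shows "S i = S k"
proof -
  have "S j \<subseteq> {..<m}" for j
    using F S by (auto simp: far_family_def)
  hence "4 * card (sym_diff (S i) (S k)) \<le> m"
    using eps_optimal_indicator_reports_close[OF opt \<open>k < n\<close>] \<open>0 < m\<close> \<open>0 < \<epsilon>\<close> by blast
  thus ?thesis
    using F S unfolding far_family_def by (meson not_le)
qed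

lemma sum_pmf_biased_truth_sq_div_uniform:
  assumes "0 \<le> a" "a \<le> 1/2"
  shows "(\<Sum>y\<in>outcome_space m.
            (pmf (outcome_dist m (biased_truth m a T)) y)\<^sup>2 / pmf (outcome_dist m (\<lambda>_. 1/2)) y)
           = (1 + 4 * a\<^sup>2) ^ m"
proof -
  have "2 * ((biased_truth m a T t)\<^sup>2 + (1 - biased_truth m a T t)\<^sup>2) = 1 + 4 * a\<^sup>2" if "t < m" for t
    using that by (auto simp: biased_truth_def power2_eq_square algebra_simps)
  thus ?thesis
    using assms by (subst sum_pmf_outcome_dist_sq_div_uniform) (auto simp: biased_truth_def)
qed

lemma mechanism_decoding_bound:
  fixes M :: "(nat \<Rightarrow> nat \<Rightarrow> real) \<Rightarrow> (nat \<Rightarrow> bool) \<Rightarrow> nat pmf" and g :: "nat \<Rightarrow> nat"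
  assumes g: "\<And>i. g i < N"
    and winners: "\<And>k. k < N \<Longrightarrow> {i. eps_optimal n m P (\<theta> k) \<epsilon> i} \<subseteq> {i \<in> {..<n}. g i = k}"
    and success: "\<And>k. k < N \<Longrightarrow> 1 - \<delta> \<le> success_prob n m M P (\<theta> k) \<epsilon>"
    and chi: "\<And>k. k < N \<Longrightarrow>
      (\<Sum>y\<in>outcome_space m. (pmf (outcome_dist m (\<theta> k)) y)\<^sup>2 / pmf (outcome_dist m (\<lambda>_. 1/2)) y) \<le> R"
    and "\<delta> \<le> 1" "0 \<le> R"
  shows "real N * (1 - \<delta>)\<^sup>2 \<le> R"
proof -
  define Q where "Q y k = (\<Sum>i\<in>{i \<in> {..<n}. g i = k}. pmf (M P y) i)" for y k
  show ?thesis
  proof (rule decoding_success_bound[where Y = "outcome_space m" and u = "pmf (outcome_dist m (\<lambda>_. 1/2))"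
        and p = "\<lambda>k. pmf (outcome_dist m (\<theta> k))" and Q = Q])
    show "(\<Sum>k<N. Q y k) \<le> 1" for y
    proof -
      have "(\<Sum>k<N. Q y k) = measure_pmf.prob (M P y) {..<n}"
        unfolding Q_def measure_measure_pmf_finite[OF finite_lessThan]
        by (rule sum.group) (use g in auto)
      thus ?thesis by simp
    qed
    show "1 - \<delta> \<le> (\<Sum>y\<in>outcome_space m. pmf (outcome_dist m (\<theta> k)) y * Q y k)" if "k < N" for k
      unfolding Q_def
      by (rule order_trans[OF success[OF that] success_prob_le_sum_outcome_space[OF winners[OF that]]]) simp
    show "(\<Sum>y\<in>outcome_space m. pmf (outcome_dist m (\<lambda>_. 1/2)) y) = 1"
      by (rule sum_pmf_eq_1[OF finite_outcome_space set_pmf_outcome_dist])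
  qed (use chi \<open>\<delta> \<le> 1\<close> \<open>0 \<le> R\<close> in \<open>auto simp: Q_def pmf_outcome_dist_uniform intro: sum_nonneg finite_outcome_space\<close>)
qed

lemma enum_far_family_le_exp:
  fixes M :: "(nat \<Rightarrow> nat \<Rightarrow> real) \<Rightarrow> (nat \<Rightarrow> bool) \<Rightarrow> nat pmf" and c :: "nat \<Rightarrow> nat set"
  assumes F: "far_family m F" and c: "inj_on c {..<N}" "c ` {..<N} \<subseteq> F"
    and "0 < N" "N \<le> n" "0 < m" "0 < \<epsilon>" "\<epsilon> \<le> 1/4" "\<delta> \<le> 1"
    and success: "\<forall>P\<in>belief_matrices n m. \<forall>\<theta>\<in>ground_truths m. 1 - \<delta> \<le> success_prob n m M P \<theta> \<epsilon>"
  shows "real N * (1 - \<delta>)\<^sup>2 \<le> exp (16 * \<epsilon>\<^sup>2 * m)"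
proof -
  define g where "g i = (if i < N then i else 0)" for i
  define S where "S i = c (g i)" for i
  have g: "g i < N" for i
    using \<open>0 < N\<close> by (simp add: g_def)
  have S_F: "S i \<in> F" for i
    using c(2) g by (auto simp: S_def)
  have "real N * (1 - \<delta>)\<^sup>2 \<le> (1 + 4 * (2 * \<epsilon>)\<^sup>2) ^ m"
  proof (rule mechanism_decoding_bound[where P = "indicator_reports n m S" and g = g
        and \<theta> = "\<lambda>k. biased_truth m (2 * \<epsilon>) (c k)"])
    show "{i. eps_optimal n m (indicator_reports n m S) (biased_truth m (2 * \<epsilon>) (c k)) \<epsilon> i}
            \<subseteq> {i \<in> {..<n}. g i = k}" if "k < N" for k
    proof
      fix i assume "i \<in> {i. eps_optimal n m (indicator_reports n m S) (biased_truth m (2 * \<epsilon>) (c k)) \<epsilon> i}"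
      moreover have "S k = c k" "k < n"
        using that \<open>N \<le> n\<close> by (auto simp: S_def g_def)
      ultimately have opt: "eps_optimal n m (indicator_reports n m S) (biased_truth m (2 * \<epsilon>) (S k)) \<epsilon> i"
        by simp
      have "c (g i) = c k"
        using eps_optimal_indicator_reports_far_family[where S = S, OF F S_F opt \<open>k < n\<close> \<open>0 < m\<close> \<open>0 < \<epsilon>\<close>]
          \<open>S k = c k\<close> by (simp add: S_def)
      hence "g i = k"
        using inj_onD[OF c(1)] g that by blast
      thus "i \<in> {i \<in> {..<n}. g i = k}"
        using opt by (simp add: eps_optimal_def)
    qed
    show "1 - \<delta> \<le> success_prob n m M (indicator_reports n m S) (biased_truth m (2 * \<epsilon>) (c k)) \<epsilon>" for k
      using success indicator_reports_in_belief_matrices biased_truth_in_ground_truths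
        \<open>0 < \<epsilon>\<close> \<open>\<epsilon> \<le> 1/4\<close> by simp
    show "(\<Sum>y\<in>outcome_space m. (pmf (outcome_dist m (biased_truth m (2 * \<epsilon>) (c k))) y)\<^sup>2
             / pmf (outcome_dist m (\<lambda>_. 1/2)) y) \<le> (1 + 4 * (2 * \<epsilon>)\<^sup>2) ^ m" for k
      using sum_pmf_biased_truth_sq_div_uniform \<open>0 < \<epsilon>\<close> \<open>\<epsilon> \<le> 1/4\<close> by simp
  qed (use g \<open>\<delta> \<le> 1\<close> in simp_all)
  also have "\<dots> \<le> exp (16 * \<epsilon>\<^sup>2) ^ m"
    by (intro power_mono) (auto simp: power_mult_distrib exp_ge_add_one_self[of "16 * \<epsilon>\<^sup>2", simplified])
  finally show ?thesis
    by (simp add: mult_ac flip: exp_of_nat_mult)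
qed

lemma ln_card_far_family_le:
  fixes M :: "(nat \<Rightarrow> nat \<Rightarrow> real) \<Rightarrow> (nat \<Rightarrow> bool) \<Rightarrow> nat pmf"
  assumes F: "far_family m F" and "2 \<le> card F" "card F \<le> n" "0 < m" "0 < \<epsilon>" "\<epsilon> \<le> 1/4"
    and success: "\<forall>P\<in>belief_matrices n m. \<forall>\<theta>\<in>ground_truths m. 1 - 1/100 \<le> success_prob n m M P \<theta> \<epsilon>"
  shows "ln (real (card F)) \<le> 20 * \<epsilon>\<^sup>2 * m"
proof -
  obtain c where c: "bij_betw c {..<card F} F"
    using ex_bij_betw_nat_finite[OF far_family_finite[OF F]] by (auto simp: atLeast0LessThan)
  have "real (card F) * (99/100)\<^sup>2 \<le> exp (16 * \<epsilon>\<^sup>2 * m)"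
    using enum_far_family_le_exp[OF F bij_betw_imp_inj_on[OF c] equalityD1[OF bij_betw_imp_surj_on[OF c]]
        _ _ _ _ _ _ success] assms(2-6) by simp
  from ln_mono[OF this] have "ln (real (card F)) + 2 * ln (99/100) \<le> 16 * \<epsilon>\<^sup>2 * m"
    using \<open>2 \<le> card F\<close> by (simp add: ln_mult ln_realpow)
  moreover have "- 1/99 \<le> ln (99/100 :: real)"
    using ln_le_minus_one[of "100/99"] by (simp add: ln_div)
  moreover have "1/2 \<le> ln (real (card F))"
  proof -
    have "1/2 \<le> ln (2 :: real)"
      using ln_le_minus_one[of "1/2"] by (simp add: ln_div)
    also have "\<dots> \<le> ln (real (card F))"
      using \<open>2 \<le> card F\<close> by simp
    finally show ?thesis .
  qed
  ultimately show ?thesis by linarith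
qed

theorem mainTheorem11:
  shows "\<exists>C::real. \<exists>\<delta>\<^sub>0::real. \<exists>\<epsilon>\<^sub>0::real. C > 0 \<and> 0 < \<delta>\<^sub>0 \<and> \<delta>\<^sub>0 < 1/8 \<and> \<epsilon>\<^sub>0 > 0 \<and>
    (\<forall>n m \<epsilon> M. 2 \<le> n \<longrightarrow> 1 \<le> m \<longrightarrow> 0 < \<epsilon> \<longrightarrow> \<epsilon> < \<epsilon>\<^sub>0 \<longrightarrow> is_mechanism n M \<longrightarrow>
      (\<forall>P\<in>belief_matrices n m. \<forall>\<theta>\<in>ground_truths m.
          success_prob n m M P \<theta> \<epsilon> \<ge> 1 - \<delta>\<^sub>0) \<longrightarrow>
      real m \<ge> C * ln (real n) / \<epsilon>^2)"
proof (rule exI[of _ "1/20"], rule exI[of _ "1/100"], rule exI[of _ "1/20"], intro conjI allI impI)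
  fix n m :: nat and \<epsilon> :: real and M :: "(nat \<Rightarrow> nat \<Rightarrow> real) \<Rightarrow> (nat \<Rightarrow> bool) \<Rightarrow> nat pmf"
  assume "2 \<le> n" "1 \<le> m" "0 < \<epsilon>" "\<epsilon> < 1/20" "is_mechanism n M"
    and success: "\<forall>P\<in>belief_matrices n m. \<forall>\<theta>\<in>ground_truths m. 1 - 1/100 \<le> success_prob n m M P \<theta> \<epsilon>"
  obtain F where F: "far_family m F" and ln_F: "real m / 20 \<le> ln (real (card F))"
    by (rule exists_far_family_ln_card_ge)
  have "2 \<le> card F"
    using ln_F \<open>1 \<le> m\<close> by (cases "card F") (auto simp: Suc_le_eq intro: ccontr)
  obtain F' where "F' \<subseteq> F" and card_F': "card F' = min n (card F)"
    by (rule obtain_subset_with_card_n[OF min.cobounded2])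
  have ln_F': "ln (real (card F')) \<le> 20 * \<epsilon>\<^sup>2 * m"
    using card_F' \<open>2 \<le> n\<close> \<open>2 \<le> card F\<close> \<open>1 \<le> m\<close> \<open>0 < \<epsilon>\<close> \<open>\<epsilon> < 1/20\<close>
    by (intro ln_card_far_family_le[OF far_family_subset[OF F \<open>F' \<subseteq> F\<close>] _ _ _ _ _ success]) auto
  have "20 * \<epsilon>\<^sup>2 * m < 20 * (1/20)\<^sup>2 * m"
    using \<open>0 < \<epsilon>\<close> \<open>\<epsilon> < 1/20\<close> \<open>1 \<le> m\<close>
    by (intro mult_strict_right_mono mult_strict_left_mono power_strict_mono) auto
  hence "card F' = n"
    using ln_F ln_F' card_F' by (cases "n \<le> card F") (simp_all add: min_def power2_eq_square)
  thus "1/20 * ln (real n) / \<epsilon>\<^sup>2 \<le> real m"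
    using ln_F' \<open>0 < \<epsilon>\<close> by (simp add: field_simps)
qed auto

end
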